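(* Let $g\in L_2(\mathbb{R}^d)$ and let $m_0(g):=\sup\{k\ge0: g\in H^k(\mathbb{R}^d)\}$ be its smoothness, and suppose $m_0(g)\in(d/2,+\infty)$. If $g\notin H^{m_0(g)}(\mathbb{R}^d)$, then there exists an increasing positive function $Q:\mathbb{R}_+\to\mathbb{R}_+$ satisfying $\lim_{s\to+\infty}\frac{\log Q(s)}{\log s}=0$ such that $$\int_{\mathbb{R}^d}\frac{|\mathcal{F}(g)(\omega)|^2}{Q(\|\omega\|)}(1+\|\omega\|^2)^{m_0(g)}d\omega\le 1,\qquad \int_{\mathbb{R}^d}\frac{|\mathcal{F}(g)(\omega)|^2}{Q(\|\omega\|)}(1+\|\omega\|^2)^{m_0(g)+\delta}d\omega=\infty\ \ \forall\delta>0.$$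
   Context: $H^k(\mathbb{R}^d)$ (for real $k\ge0$, possibly non-integer) is the Sobolev space of $g\in L_2(\mathbb{R}^d)$ with $\|g\|_{H^k(\mathbb{R}^d)}^2=\int_{\mathbb{R}^d}|\mathcal{F}(g)(\omega)|^2(1+\|\omega\|_2^2)^kd\omega<\infty$, where $\mathcal{F}(g)(\omega)=(2\pi)^{-d/2}\int g(x)e^{-ix^T\omega}dx$. *)

theory Defs
  imports "HOL-Analysis.Analysis"
begin

text \<open>Functions on R^d are modelled as functions on a Euclidean space 'a with d = DIM('a).\<close>

definition square_integrable :: "('a::euclidean_space \<Rightarrow> complex) \<Rightarrow> bool" where
  "square_integrable g \<longleftrightarrow> g \<in> borel_measurable lborel \<and>
     integrable lborel (\<lambda>x. (cmod (g x))\<^sup>2)"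

definition fourier_integral :: "('a::euclidean_space \<Rightarrow> complex) \<Rightarrow> 'a \<Rightarrow> complex" where
  "fourier_integral f \<omega> =
     of_real ((2 * pi) powr (- real DIM('a) / 2)) *
     integral\<^sup>L lborel (\<lambda>x. f x * cis (- (x \<bullet> \<omega>)))"

definition is_L2_fourier :: "('a::euclidean_space \<Rightarrow> complex) \<Rightarrow> ('a \<Rightarrow> complex) \<Rightarrow> bool" where
  "is_L2_fourier g G \<longleftrightarrow> square_integrable G \<and>
     ((\<lambda>R. \<integral>\<^sup>+ \<omega>. ennreal ((cmod (G \<omega> - fourier_integral
          (\<lambda>x. indicator (ball 0 R) x * g x) \<omega>))\<^sup>2) \<partial>lborel) \<longlongrightarrow> 0) at_top"

definition fourier_L2 :: "('a::euclidean_space \<Rightarrow> complex) \<Rightarrow> 'a \<Rightarrow> complex" where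
  "fourier_L2 g = (SOME G. is_L2_fourier g G)"

definition in_sobolev :: "real \<Rightarrow> ('a::euclidean_space \<Rightarrow> complex) \<Rightarrow> bool" where
  "in_sobolev k g \<longleftrightarrow> square_integrable g \<and>
     (\<integral>\<^sup>+ \<omega>. ennreal ((cmod (fourier_L2 g \<omega>))\<^sup>2 * (1 + (norm \<omega>)\<^sup>2) powr k) \<partial>lborel) < \<infinity>"

definition smoothness :: "('a::euclidean_space \<Rightarrow> complex) \<Rightarrow> ereal" where
  "smoothness g = Sup (ereal ` {k. 0 \<le> k \<and> in_sobolev k g})"

end

theory Submission
  imports Defs
begin

(* Put f = |F g|^2 (1 + |w|^2)^m0.  Below the smoothness every integral of
   f (1 + |w|^2)^(-e) with e > 0 is finite, while the integral of f itself is infinite.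
   With e_n = 1/(n+1) choose a_n > 0 such that a_n times the e_n-integral is at most
   2^-(n+1), and let 1/Q(r) = sum_n a_n (1 + r^2)^(-e_n).  Then the integral of f/Q is at
   most sum_n 2^-(n+1) = 1.  Conversely 1/Q(r) >= a_n (1 + r^2)^(-e_n), so
   Q(r) <= (1 + r^2)^e_n / a_n grows slower than every power of r, and once e_n <= delta
   the integrand f/Q (1 + |w|^2)^delta dominates a_n f, whose integral is infinite. *)

(* fourier_L2 is defined by choice and need not be measurable, so the integral estimates
   below make no measurability assumption on the integrand. *)
lemma nn_integral_le_measurable_minorants:
  assumes "\<And>u. u \<in> borel_measurable M \<Longrightarrow> (\<And>x. u x \<le> f x) \<Longrightarrow> integral\<^sup>N M u \<le> B"
  shows "integral\<^sup>N M f \<le> B"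
  unfolding nn_integral_def
proof (rule SUP_least)
  fix g assume "g \<in> {g. simple_function M g \<and> g \<le> f}"
  then have g: "simple_function M g" "g \<le> f" by auto
  have "integral\<^sup>S M g = integral\<^sup>N M g" using g(1) by (simp add: nn_integral_eq_simple_integral)
  also have "\<dots> \<le> B" using assms[of g] g borel_measurable_simple_function[OF g(1)]
    by (auto simp: le_fun_def)
  finally show "integral\<^sup>S M g \<le> B" .
qed

lemma nn_integral_cmult_ge: "c * integral\<^sup>N M f \<le> (\<integral>\<^sup>+ x. c * f x \<partial>M)"
  unfolding nn_integral_def[of M f] SUP_mult_left_ennreal
proof (rule SUP_least)
  fix g assume "g \<in> {g. simple_function M g \<and> g \<le> f}"
  then have g: "simple_function M g" "g \<le> f" by auto
  have "c * integral\<^sup>S M g = (\<integral>\<^sup>+ x. c * g x \<partial>M)"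
    using g(1) by (simp add: nn_integral_cmult borel_measurable_simple_function nn_integral_eq_simple_integral)
  also have "\<dots> \<le> (\<integral>\<^sup>+ x. c * f x \<partial>M)"
    using g(2) by (intro nn_integral_mono mult_left_mono) (auto simp: le_fun_def)
  finally show "c * integral\<^sup>S M g \<le> (\<integral>\<^sup>+ x. c * f x \<partial>M)" .
qed

lemma nn_integral_cmult_finite:
  assumes "c < \<infinity>"
  shows "(\<integral>\<^sup>+ x. c * f x \<partial>M) = c * integral\<^sup>N M f"
proof (cases "c = 0")
  case False
  with assms have inv: "c * inverse c = 1"
    using ennreal_divide_self[of c] by (simp add: divide_ennreal_def)
  have "(\<integral>\<^sup>+ x. c * f x \<partial>M) = c * (inverse c * (\<integral>\<^sup>+ x. c * f x \<partial>M))"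
    by (simp add: mult.assoc[symmetric] inv)
  also have "\<dots> \<le> c * (\<integral>\<^sup>+ x. inverse c * (c * f x) \<partial>M)"
    by (intro mult_left_mono nn_integral_cmult_ge) simp
  also have "\<dots> = c * integral\<^sup>N M f"
    by (simp add: mult.assoc[symmetric] mult.commute[of "inverse c"] inv)
  finally show ?thesis using nn_integral_cmult_ge[of c M f] by (rule antisym)
qed simp

lemma nn_integral_mult_suminf_le:
  fixes t :: "nat \<Rightarrow> 'a \<Rightarrow> ennreal"
  assumes t_meas: "\<And>n. t n \<in> borel_measurable M" and finite: "\<And>x. (\<Sum>n. t n x) < \<infinity>"
  shows "(\<integral>\<^sup>+ x. u x * (\<Sum>n. t n x) \<partial>M) \<le> (\<Sum>n. \<integral>\<^sup>+ x. u x * t n x \<partial>M)"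
proof (rule nn_integral_le_measurable_minorants)
  fix v assume v_meas: "v \<in> borel_measurable M" and v_le: "\<And>x. v x \<le> u x * (\<Sum>n. t n x)"
  define w where "w x = v x / (\<Sum>n. t n x)" for x
  have w_meas: "w \<in> borel_measurable M" unfolding w_def using v_meas t_meas by measurable
  have v_eq: "v x = w x * (\<Sum>n. t n x)" for x
  proof (cases "(\<Sum>n. t n x) = 0")
    case True
    with v_le[of x] show ?thesis by (simp add: w_def)
  qed (use finite[of x] in \<open>simp add: w_def ennreal_divide_times\<close>)
  have w_le: "w x \<le> u x" for x
  proof (cases "(\<Sum>n. t n x) = 0")
    case False
    have "w x \<le> u x * (\<Sum>n. t n x) / (\<Sum>n. t n x)"
      unfolding w_def using v_le[of x] by (intro divide_right_mono_ennreal)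
    with False finite[of x] show ?thesis
      by (simp add: ennreal_times_divide[symmetric])
  qed (use v_le[of x] in \<open>simp add: w_def\<close>)
  have "integral\<^sup>N M v = (\<Sum>n. \<integral>\<^sup>+ x. w x * t n x \<partial>M)"
    unfolding v_eq ennreal_suminf_cmult[symmetric] using w_meas t_meas by (intro nn_integral_suminf) auto
  also have "\<dots> \<le> (\<Sum>n. \<integral>\<^sup>+ x. u x * t n x \<partial>M)"
    using w_le by (intro suminf_le summableI nn_integral_mono mult_right_mono) auto
  finally show "integral\<^sup>N M v \<le> \<dots>" .
qed

definition radial_decay :: "(nat \<Rightarrow> real) \<Rightarrow> (nat \<Rightarrow> real) \<Rightarrow> real \<Rightarrow> real" where
  "radial_decay a e r = (\<Sum>n. a n * (1 + r\<^sup>2) powr (- e n))"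

lemma radial_decay_term_le:
  fixes r :: real
  assumes "0 \<le> a n" "0 \<le> e n"
  shows "a n * (1 + r\<^sup>2) powr (- e n) \<le> a n"
proof -
  have "(1 + r\<^sup>2) powr (- e n) \<le> 1"
    using assms(2) ge_one_powr_ge_zero[of "1 + r\<^sup>2" "e n"] by (simp add: powr_minus inverse_le_1_iff)
  then show ?thesis using assms(1) by (simp add: mult_left_le)
qed

lemma summable_radial_decay_terms:
  fixes a e :: "nat \<Rightarrow> real"
  assumes "\<And>n. 0 \<le> a n" "summable a" "\<And>n. 0 \<le> e n"
  shows "summable (\<lambda>n. a n * (1 + r\<^sup>2) powr (- e n))"
  by (rule summable_comparison_test'[OF assms(2)]) (use assms in \<open>auto intro!: radial_decay_term_le\<close>)

lemma radial_decay_le_suminf: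
  fixes a e :: "nat \<Rightarrow> real"
  assumes "\<And>n. 0 \<le> a n" "summable a" "\<And>n. 0 \<le> e n"
  shows "radial_decay a e r \<le> suminf a"
  unfolding radial_decay_def
  using assms by (intro suminf_le summable_radial_decay_terms radial_decay_term_le)

lemma radial_decay_ge_term:
  fixes a e :: "nat \<Rightarrow> real"
  assumes "\<And>n. 0 \<le> a n" "summable a" "\<And>n. 0 \<le> e n"
  shows "a n * (1 + r\<^sup>2) powr (- e n) \<le> radial_decay a e r"
  unfolding radial_decay_def
  using assms by (intro sum_le_suminf[of _ "{n}", simplified] summable_radial_decay_terms) auto

lemma radial_decay_nonneg:
  fixes a e :: "nat \<Rightarrow> real"
  assumes "\<And>n. 0 \<le> a n" "summable a" "\<And>n. 0 \<le> e n"
  shows "0 \<le> radial_decay a e r"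
  unfolding radial_decay_def using assms by (intro suminf_nonneg summable_radial_decay_terms) auto

lemma radial_decay_mult_powr_ge:
  fixes a e :: "nat \<Rightarrow> real"
  assumes "\<And>n. 0 \<le> a n" "summable a" "\<And>n. 0 \<le> e n" "e n \<le> \<delta>"
  shows "a n \<le> radial_decay a e r * (1 + r\<^sup>2) powr \<delta>"
proof -
  have base: "1 \<le> 1 + r\<^sup>2" by simp
  then have "1 + r\<^sup>2 \<noteq> 0" by linarith
  then have "(1 + r\<^sup>2) powr (- e n) * (1 + r\<^sup>2) powr e n = 1"
    by (simp add: powr_add[symmetric])
  then have "a n = a n * (1 + r\<^sup>2) powr (- e n) * (1 + r\<^sup>2) powr e n"
    by (simp add: mult.assoc)
  also have "\<dots> \<le> radial_decay a e r * (1 + r\<^sup>2) powr \<delta>"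
    using assms base radial_decay_ge_term[OF assms(1-3)]
    by (intro mult_mono powr_mono radial_decay_nonneg) auto
  finally show ?thesis .
qed

lemma radial_decay_pos:
  fixes a e :: "nat \<Rightarrow> real"
  assumes "\<And>n. 0 < a n" "summable a" "\<And>n. 0 \<le> e n"
  shows "0 < radial_decay a e r"
  unfolding radial_decay_def
proof (rule suminf_pos)
  have "0 < 1 + r\<^sup>2" by (simp add: add_pos_nonneg)
  then show "0 < a n * (1 + r\<^sup>2) powr (- e n)" for n using assms(1) by simp
qed (use assms in \<open>auto intro: less_imp_le summable_radial_decay_terms\<close>)

lemma radial_decay_antimono:
  fixes a e :: "nat \<Rightarrow> real"
  assumes "\<And>n. 0 \<le> a n" "summable a" "\<And>n. 0 \<le> e n" "0 \<le> r" "r \<le> r'"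
  shows "radial_decay a e r' \<le> radial_decay a e r"
  unfolding radial_decay_def
proof (rule suminf_le)
  fix n
  have "(1 + r'\<^sup>2) powr (- e n) \<le> (1 + r\<^sup>2) powr (- e n)"
    using assms by (intro powr_mono2') (auto intro: power_mono add_pos_nonneg)
  then show "a n * (1 + r'\<^sup>2) powr (- e n) \<le> a n * (1 + r\<^sup>2) powr (- e n)"
    using assms(1) by (rule mult_left_mono)
qed (use assms in \<open>auto intro: summable_radial_decay_terms\<close>)

lemma ln_ratio_tendsto_0_if_subpolynomial:
  fixes Q :: "real \<Rightarrow> real"
  assumes ge_1: "\<And>s. 1 \<le> Q s"
    and subpoly: "\<And>\<epsilon>. 0 < \<epsilon> \<Longrightarrow> \<exists>C. \<forall>s\<ge>1. Q s \<le> C * s powr \<epsilon>"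
  shows "((\<lambda>s. ln (Q s) / ln s) \<longlongrightarrow> 0) at_top"
  unfolding tendsto_iff
proof (intro allI impI)
  fix \<epsilon> :: real assume "0 < \<epsilon>"
  then obtain C where C: "\<And>s. 1 \<le> s \<Longrightarrow> Q s \<le> C * s powr (\<epsilon> / 2)"
    using subpoly[of "\<epsilon> / 2"] by auto
  have C_pos: "0 < C" using C[of 1] ge_1[of 1] by simp
  have "((\<lambda>s. ln C / ln s) \<longlongrightarrow> 0) at_top"
    by (intro tendsto_divide_0[OF tendsto_const] filterlim_at_top_imp_at_infinity ln_at_top)
  then have "eventually (\<lambda>s. ln C / ln s < \<epsilon> / 2) at_top"
    using \<open>0 < \<epsilon>\<close> by (intro order_tendstoD(2)) auto
  then show "eventually (\<lambda>s. dist (ln (Q s) / ln s) 0 < \<epsilon>) at_top"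
    using eventually_gt_at_top[of 1]
  proof eventually_elim
    case (elim s)
    then have ln_s: "0 < ln s" by simp
    have "ln (Q s) \<le> ln (C * s powr (\<epsilon> / 2))"
      using C[of s] ge_1[of s] elim by simp
    also have "\<dots> = ln C + \<epsilon> / 2 * ln s"
      using C_pos elim by (simp add: ln_mult ln_powr)
    finally have "ln (Q s) / ln s \<le> ln C / ln s + \<epsilon> / 2"
      using ln_s by (simp add: field_simps)
    then have "ln (Q s) / ln s < \<epsilon>" using elim(1) by linarith
    moreover have "0 \<le> ln (Q s)" using ge_1[of s] by simp
    ultimately show ?case using ln_s by simp
  qed
qed

lemma nn_integral_mult_radial_decay_le:
  fixes a e :: "nat \<Rightarrow> real" and \<rho> F :: "'a \<Rightarrow> real"
  assumes a: "\<And>n. 0 \<le> a n" "summable a" and e: "\<And>n. 0 \<le> e n"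
    and \<rho>: "\<rho> \<in> borel_measurable M" and F: "\<And>x. 0 \<le> F x"
  shows "(\<integral>\<^sup>+ x. ennreal (F x * radial_decay a e (\<rho> x)) \<partial>M)
    \<le> (\<Sum>n. ennreal (a n) * (\<integral>\<^sup>+ x. ennreal (F x * (1 + (\<rho> x)\<^sup>2) powr (- e n)) \<partial>M))"
proof -
  define t where "t n x = ennreal (a n * (1 + (\<rho> x)\<^sup>2) powr (- e n))" for n x
  have sum_t: "(\<Sum>n. t n x) = ennreal (radial_decay a e (\<rho> x))" for x
    unfolding t_def radial_decay_def using a e
    by (intro suminf_ennreal2 summable_radial_decay_terms) auto
  have "(\<integral>\<^sup>+ x. ennreal (F x * radial_decay a e (\<rho> x)) \<partial>M)
      = (\<integral>\<^sup>+ x. ennreal (F x) * (\<Sum>n. t n x) \<partial>M)"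
    using F a e by (simp add: sum_t ennreal_mult radial_decay_nonneg)
  also have "\<dots> \<le> (\<Sum>n. \<integral>\<^sup>+ x. ennreal (F x) * t n x \<partial>M)"
    using \<rho> by (intro nn_integral_mult_suminf_le) (simp add: t_def, simp add: sum_t)
  also have "\<dots> = (\<Sum>n. ennreal (a n) * (\<integral>\<^sup>+ x. ennreal (F x * (1 + (\<rho> x)\<^sup>2) powr (- e n)) \<partial>M))"
  proof -
    have "ennreal (F x) * t n x = ennreal (a n) * ennreal (F x * (1 + (\<rho> x)\<^sup>2) powr (- e n))" for n x
      using F[of x] a(1)[of n] by (simp add: t_def ennreal_mult[symmetric] mult_ac)
    then show ?thesis by (simp add: nn_integral_cmult_finite)
  qed
  finally show ?thesis .
qed

lemma inverse_radial_decay_le: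
  fixes a e :: "nat \<Rightarrow> real"
  assumes "\<And>n. 0 < a n" "summable a" "\<And>n. 0 \<le> e n" "1 \<le> s"
  shows "1 / radial_decay a e s \<le> 2 powr e n / a n * s powr (2 * e n)"
proof -
  have "1 / radial_decay a e s \<le> (1 + s\<^sup>2) powr e n / a n"
    using assms radial_decay_pos[of a e s] radial_decay_mult_powr_ge[of a e n "e n" s]
    by (simp add: field_simps less_imp_le)
  also have "\<dots> \<le> (2 * s\<^sup>2) powr e n / a n"
  proof -
    have "1 + s\<^sup>2 \<le> 2 * s\<^sup>2" using assms(4) one_le_power[of s 2] by simp
    then show ?thesis using assms(1)[of n] assms(3)[of n]
      by (intro divide_right_mono powr_mono2) (auto simp: add_pos_nonneg)
  qed
  also have "\<dots> = 2 powr e n / a n * s powr (2 * e n)"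
  proof -
    have "s\<^sup>2 = s powr 2" using assms(4) by (simp add: powr_numeral)
    then have "(s\<^sup>2) powr e n = s powr (2 * e n)" by (simp only: powr_powr)
    moreover have "(2 * s\<^sup>2) powr e n = 2 powr e n * (s\<^sup>2) powr e n"
      by (rule powr_mult)
    ultimately show ?thesis by simp
  qed
  finally show ?thesis .
qed

lemma exists_pos_scaling_below:
  fixes c :: "nat \<Rightarrow> ennreal" and b :: "nat \<Rightarrow> real"
  assumes "\<And>n. c n < \<infinity>" "\<And>n. 0 < b n"
  shows "\<exists>a. \<forall>n. 0 < a n \<and> a n \<le> b n \<and> ennreal (a n) * c n \<le> ennreal (b n)"
proof (intro exI allI conjI)
  fix n
  define a where "a n = b n / (1 + enn2real (c n))" for n
  show "0 < a n" "a n \<le> b n" using assms(2)[of n] by (auto simp: a_def divide_le_eq add_pos_nonneg)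
  have "ennreal (a n) * c n = ennreal (a n * enn2real (c n))"
    using assms(1)[of n] \<open>0 < a n\<close> by (simp add: ennreal_mult ennreal_enn2real_if)
  also have "\<dots> \<le> ennreal (b n)"
    using assms(2)[of n] by (intro ennreal_leI) (simp add: a_def divide_le_eq add_pos_nonneg)
  finally show "ennreal (a n) * c n \<le> ennreal (b n)" .
qed

lemma inverse_radial_decay_ge_1:
  fixes a e :: "nat \<Rightarrow> real"
  assumes "\<And>n. 0 < a n" "summable a" "suminf a \<le> 1" "\<And>n. 0 \<le> e n"
  shows "1 \<le> 1 / radial_decay a e s"
proof -
  have "0 \<le> a n" for n using assms(1)[of n] by simp
  then have "radial_decay a e s \<le> suminf a"
    using assms(2,4) by (rule radial_decay_le_suminf)
  then have "radial_decay a e s \<le> 1" using assms(3) by simp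
  then show ?thesis using radial_decay_pos[of a e s] assms by simp
qed

lemma mono_on_inverse_radial_decay:
  fixes a e :: "nat \<Rightarrow> real"
  assumes "\<And>n. 0 < a n" "summable a" "\<And>n. 0 \<le> e n"
  shows "mono_on {0..} (\<lambda>s. 1 / radial_decay a e s)"
proof (rule mono_onI)
  fix r r' :: real assume "r \<in> {0..}" "r' \<in> {0..}" "r \<le> r'"
  then have "radial_decay a e r' \<le> radial_decay a e r"
    using assms by (intro radial_decay_antimono) (auto intro: less_imp_le)
  then show "1 / radial_decay a e r \<le> 1 / radial_decay a e r'"
    using radial_decay_pos[OF assms, where r=r] radial_decay_pos[OF assms, where r=r']
    by (intro divide_left_mono) auto
qed

lemma ln_inverse_radial_decay_tendsto_0:
  fixes a e :: "nat \<Rightarrow> real"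
  assumes "\<And>n. 0 < a n" "summable a" "suminf a \<le> 1" "\<And>n. 0 \<le> e n" "e \<longlonglongrightarrow> 0"
  shows "((\<lambda>s. ln (1 / radial_decay a e s) / ln s) \<longlongrightarrow> 0) at_top"
proof (rule ln_ratio_tendsto_0_if_subpolynomial)
  show "1 \<le> 1 / radial_decay a e s" for s
    using assms(1-4) by (rule inverse_radial_decay_ge_1)
  fix \<epsilon> :: real assume "0 < \<epsilon>"
  then have "eventually (\<lambda>n. e n < \<epsilon> / 2) sequentially"
    by (intro order_tendstoD(2)[OF assms(5)]) simp
  then obtain n where n: "e n < \<epsilon> / 2" by (auto simp: eventually_sequentially)
  have "1 / radial_decay a e s \<le> 2 powr e n / a n * s powr \<epsilon>" if "1 \<le> s" for s
  proof -
    have "1 / radial_decay a e s \<le> 2 powr e n / a n * s powr (2 * e n)"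
      using assms(1,2,4) that by (rule inverse_radial_decay_le)
    also have "\<dots> \<le> 2 powr e n / a n * s powr \<epsilon>"
      using assms(1)[of n] n that by (intro mult_left_mono powr_mono) auto
    finally show ?thesis .
  qed
  then show "\<exists>C. \<forall>s\<ge>1. 1 / radial_decay a e s \<le> C * s powr \<epsilon>" by blast
qed

lemma nn_integral_radial_decay_powr_eq_top:
  fixes a e :: "nat \<Rightarrow> real" and \<rho> F :: "'a \<Rightarrow> real"
  assumes a: "\<And>n. 0 < a n" "summable a" and e: "\<And>n. 0 \<le> e n" "e N \<le> \<delta>"
    and F: "\<And>x. 0 \<le> F x" and infinite: "(\<integral>\<^sup>+ x. ennreal (F x) \<partial>M) = \<infinity>"
  shows "(\<integral>\<^sup>+ x. ennreal (F x * radial_decay a e (\<rho> x) * (1 + (\<rho> x)\<^sup>2) powr \<delta>) \<partial>M) = \<infinity>"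
proof -
  have "\<infinity> = ennreal (a N) * (\<integral>\<^sup>+ x. ennreal (F x) \<partial>M)"
    using a(1)[of N] infinite by (simp add: ennreal_mult_top)
  also have "\<dots> = (\<integral>\<^sup>+ x. ennreal (a N * F x) \<partial>M)"
    using a(1)[of N] F by (simp add: ennreal_mult nn_integral_cmult_finite)
  also have "\<dots> \<le> (\<integral>\<^sup>+ x. ennreal (F x * radial_decay a e (\<rho> x) * (1 + (\<rho> x)\<^sup>2) powr \<delta>) \<partial>M)"
  proof (intro nn_integral_mono ennreal_leI)
    fix x
    have "a N \<le> radial_decay a e (\<rho> x) * (1 + (\<rho> x)\<^sup>2) powr \<delta>"
      using a e by (intro radial_decay_mult_powr_ge) (auto intro: less_imp_le)
    then have "F x * a N \<le> F x * (radial_decay a e (\<rho> x) * (1 + (\<rho> x)\<^sup>2) powr \<delta>)"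
      using F[of x] by (rule mult_left_mono)
    then show "a N * F x \<le> F x * radial_decay a e (\<rho> x) * (1 + (\<rho> x)\<^sup>2) powr \<delta>"
      by (simp add: mult_ac)
  qed
  finally show ?thesis by (simp add: top_unique)
qed

lemma subpolynomial_weight_exists:
  fixes F \<rho> :: "'a \<Rightarrow> real"
  assumes \<rho>: "\<rho> \<in> borel_measurable M" and F: "\<And>x. 0 \<le> F x"
    and finite: "\<And>\<epsilon>. 0 < \<epsilon> \<Longrightarrow> (\<integral>\<^sup>+ x. ennreal (F x * (1 + (\<rho> x)\<^sup>2) powr (- \<epsilon>)) \<partial>M) < \<infinity>"
    and infinite: "(\<integral>\<^sup>+ x. ennreal (F x) \<partial>M) = \<infinity>"
  shows "\<exists>Q. mono_on {0..} Q \<and> (\<forall>s\<ge>0. Q s > 0) \<and> ((\<lambda>s. ln (Q s) / ln s) \<longlongrightarrow> 0) at_top \<and>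
    (\<integral>\<^sup>+ x. ennreal (F x / Q (\<rho> x)) \<partial>M) \<le> 1 \<and>
    (\<forall>\<delta>>0. (\<integral>\<^sup>+ x. ennreal (F x / Q (\<rho> x) * (1 + (\<rho> x)\<^sup>2) powr \<delta>) \<partial>M) = \<infinity>)"
proof -
  define e :: "nat \<Rightarrow> real" where "e n = inverse (real (Suc n))" for n
  have e_pos: "0 < e n" for n by (simp add: e_def)
  have e_lim: "e \<longlonglongrightarrow> 0"
    unfolding e_def by (rule LIMSEQ_inverse_real_of_nat)
  define c where "c n = (\<integral>\<^sup>+ x. ennreal (F x * (1 + (\<rho> x)\<^sup>2) powr (- e n)) \<partial>M)" for n
  have "\<exists>a. \<forall>n. 0 < a n \<and> a n \<le> (1/2)^Suc n \<and> ennreal (a n) * c n \<le> ennreal ((1/2)^Suc n)"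
    using finite e_pos by (intro exists_pos_scaling_below) (simp_all add: c_def)
  then obtain a where a_pos: "\<And>n. 0 < a n" and a_le: "\<And>n. a n \<le> (1/2)^Suc n"
    and a_c: "\<And>n. ennreal (a n) * c n \<le> ennreal ((1/2)^Suc n)"
    by blast
  have summable_a: "summable a"
    using a_pos a_le
    by (intro summable_comparison_test'[OF sums_summable[OF power_half_series]]) (simp add: abs_of_pos)
  have suminf_a: "suminf a \<le> 1"
    using suminf_le[OF a_le summable_a sums_summable[OF power_half_series]] power_half_series
    by (simp add: sums_unique[symmetric])
  have e_nonneg: "0 \<le> e n" for n using e_pos[of n] by simp
  define Q where "Q s = 1 / radial_decay a e s" for s
  have "mono_on {0..} Q"
    unfolding Q_def[abs_def] using a_pos summable_a e_nonneg by (rule mono_on_inverse_radial_decay)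
  moreover have "1 \<le> Q s" for s
    unfolding Q_def using a_pos summable_a suminf_a e_nonneg by (rule inverse_radial_decay_ge_1)
  moreover have "((\<lambda>s. ln (Q s) / ln s) \<longlongrightarrow> 0) at_top"
    unfolding Q_def using a_pos summable_a suminf_a e_nonneg e_lim by (rule ln_inverse_radial_decay_tendsto_0)
  moreover have "(\<integral>\<^sup>+ x. ennreal (F x / Q (\<rho> x)) \<partial>M) \<le> 1"
  proof -
    have "(\<integral>\<^sup>+ x. ennreal (F x / Q (\<rho> x)) \<partial>M) = (\<integral>\<^sup>+ x. ennreal (F x * radial_decay a e (\<rho> x)) \<partial>M)"
      by (simp add: Q_def)
    also have "\<dots> \<le> (\<Sum>n. ennreal (a n) * c n)"
      unfolding c_def using a_pos summable_a e_nonneg \<rho> F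
      by (intro nn_integral_mult_radial_decay_le) (auto intro: less_imp_le)
    also have "\<dots> \<le> (\<Sum>n. ennreal ((1/2)^Suc n))"
      using a_c by (intro suminf_le summableI)
    also have "\<dots> = 1"
      using power_half_series by (simp add: suminf_ennreal2 sums_unique[symmetric] sums_summable)
    finally show ?thesis .
  qed
  moreover have "(\<integral>\<^sup>+ x. ennreal (F x / Q (\<rho> x) * (1 + (\<rho> x)\<^sup>2) powr \<delta>) \<partial>M) = \<infinity>"
    if "0 < \<delta>" for \<delta>
  proof -
    have "eventually (\<lambda>n. e n < \<delta>) sequentially"
      using order_tendstoD(2)[OF e_lim that] .
    then obtain N where "e N \<le> \<delta>" by (meson eventually_sequentially order_refl less_imp_le)
    have "(\<integral>\<^sup>+ x. ennreal (F x * radial_decay a e (\<rho> x) * (1 + (\<rho> x)\<^sup>2) powr \<delta>) \<partial>M) = \<infinity>"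
      using a_pos summable_a e_nonneg \<open>e N \<le> \<delta>\<close> F infinite
      by (rule nn_integral_radial_decay_powr_eq_top)
    then show ?thesis by (simp add: Q_def)
  qed
  ultimately show ?thesis
    by (intro exI[of _ Q]) (auto intro: less_le_trans[OF zero_less_one])
qed

lemma sobolev_nn_integral_finite_below_smoothness:
  fixes g :: "'a::euclidean_space \<Rightarrow> complex"
  assumes "ereal k < smoothness g"
  shows "(\<integral>\<^sup>+ \<omega>. ennreal ((cmod (fourier_L2 g \<omega>))\<^sup>2 * (1 + (norm \<omega>)\<^sup>2) powr k) \<partial>lborel) < \<infinity>"
proof -
  obtain j where j: "0 \<le> j" "in_sobolev j g" "k < j"
    using assms by (auto simp: smoothness_def less_Sup_iff)
  have "(\<integral>\<^sup>+ \<omega>. ennreal ((cmod (fourier_L2 g \<omega>))\<^sup>2 * (1 + (norm \<omega>)\<^sup>2) powr k) \<partial>lborel)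
      \<le> (\<integral>\<^sup>+ \<omega>. ennreal ((cmod (fourier_L2 g \<omega>))\<^sup>2 * (1 + (norm \<omega>)\<^sup>2) powr j) \<partial>lborel)"
    using j(3) by (intro nn_integral_mono ennreal_leI mult_left_mono powr_mono) auto
  also have "\<dots> < \<infinity>"
    using j(2) by (simp add: in_sobolev_def)
  finally show ?thesis .
qed

theorem lemma1:
  fixes g :: "'a::euclidean_space \<Rightarrow> complex"
  assumes "square_integrable g"
    and "ereal (real DIM('a) / 2) < smoothness g"
    and "smoothness g < \<infinity>"
    and "\<not> in_sobolev (real_of_ereal (smoothness g)) g"
  shows "\<exists>Q :: real \<Rightarrow> real.
     mono_on {0..} Q \<and> (\<forall>s\<ge>0. Q s > 0) \<and>
     ((\<lambda>s. ln (Q s) / ln s) \<longlongrightarrow> 0) at_top \<and>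
     (\<integral>\<^sup>+ \<omega>. ennreal ((cmod (fourier_L2 g \<omega>))\<^sup>2 / Q (norm \<omega>) *
        (1 + (norm \<omega>)\<^sup>2) powr real_of_ereal (smoothness g)) \<partial>lborel) \<le> 1 \<and>
     (\<forall>\<delta>>0. (\<integral>\<^sup>+ \<omega>. ennreal ((cmod (fourier_L2 g \<omega>))\<^sup>2 / Q (norm \<omega>) *
        (1 + (norm \<omega>)\<^sup>2) powr (real_of_ereal (smoothness g) + \<delta>)) \<partial>lborel) = \<infinity>)"
proof -
  define m where "m = real_of_ereal (smoothness g)"
  \<comment> \<open>The hypothesis d/2 < m0 is only needed to exclude smoothness g = -\<infinity>.\<close>
  have smoothness: "smoothness g = ereal m"
    using assms(2,3) unfolding m_def by (cases "smoothness g") auto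
  define F where "F \<omega> = (cmod (fourier_L2 g \<omega>))\<^sup>2 * (1 + (norm \<omega>)\<^sup>2) powr m" for \<omega> :: 'a
  have F_powr: "F \<omega> * (1 + (norm \<omega>)\<^sup>2) powr t
      = (cmod (fourier_L2 g \<omega>))\<^sup>2 * (1 + (norm \<omega>)\<^sup>2) powr (m + t)" for \<omega> t by (simp add: F_def powr_add)
  have "\<exists>Q. mono_on {0..} Q \<and> (\<forall>s\<ge>0. Q s > 0) \<and> ((\<lambda>s. ln (Q s) / ln s) \<longlongrightarrow> 0) at_top \<and>
    (\<integral>\<^sup>+ \<omega>. ennreal (F \<omega> / Q (norm \<omega>)) \<partial>lborel) \<le> 1 \<and>
    (\<forall>\<delta>>0. (\<integral>\<^sup>+ \<omega>. ennreal (F \<omega> / Q (norm \<omega>) * (1 + (norm \<omega>)\<^sup>2) powr \<delta>) \<partial>lborel) = \<infinity>)"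
  proof (rule subpolynomial_weight_exists)
    show "(\<integral>\<^sup>+ \<omega>. ennreal (F \<omega> * (1 + (norm \<omega>)\<^sup>2) powr - \<epsilon>) \<partial>lborel) < \<infinity>"
      if "0 < \<epsilon>" for \<epsilon>
      unfolding F_powr using that smoothness by (intro sobolev_nn_integral_finite_below_smoothness) simp
    show "(\<integral>\<^sup>+ \<omega>. ennreal (F \<omega>) \<partial>lborel) = \<infinity>"
      using assms(1,4) by (simp add: in_sobolev_def F_def m_def less_top[symmetric])
  qed (simp_all add: F_def)
  then show ?thesis
    by (simp add: F_def m_def powr_add mult_ac)
qed

end
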